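(* Let $(\lambda_k),(x_k),(y_k)$ be generated by the acceleration framework (context) for a convex differentiable $g$ with minimizer $x^*$, $g^*=g(x^* )$, parameters $\sigma\in(0,1)$, $\delta\ge0$. Then for all $k\ge1$, \[ A_k[g(y_k)-g^*]+\frac12\|x_k-x^*\|^2+\sum_{i\in[k]}\frac{(1-\sigma)A_i}{2\lambda_i}\|y_i-\tilde x_{i-1}\|^2\le\frac12\|x^*\|^2+\delta_k, \] where $\delta_k=\delta\sum_{i\in[k]}a_i\|x_i-x^*\|+\frac{\delta^2}{2(1-\sigma)}\sum_{i\in[k]}a_i^2$.
   Context: Acceleration framework: let $g:\mathbb{R}^d\to\mathbb{R}$ be convex and differentiable, $\sigma\in(0,1)$, $\delta\ge0$, $K\ge1$. Sequences $(\lambda_k)_{k=1}^K\subset(0,\infty)$ and $(x_k)_{k=0}^K,(y_k)_{k=0}^K\subset\mathbb{R}^d$ are generated by the framework if $x_0=y_0=0$, $A_0=0$, and for each $k=0,\dots,K-1$, with $a_{k+1}=\frac12\big[\lambda_{k+1}+\sqrt{\lambda_{k+1}^2+4\lambda_{k+1}A_k}\big]$, $A_{k+1}=A_k+a_{k+1}$, $\tilde x_k=\frac{A_k}{A_{k+1}}y_k+\frac{a_{k+1}}{A_{k+1}}x_k$, one has $\|\lambda_{k+1}\nabla g(y_{k+1})+y_{k+1}-\tilde x_k\|\le\sigma\|y_{k+1}-\tilde x_k\|+\lambda_{k+1}\delta$ and $\|x_{k+1}-(x_k-a_{k+1}\nabla g(y_{k+1}))\|\le a_{k+1}\delta$. (Note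 $\lambda_{k+1}A_{k+1}=a_{k+1}^2$.) *)

theory Defs
  imports "HOL-Analysis.Analysis"
begin

text \<open>Step sizes a_k and accumulated weights A_k determined by the sequence lam
 (lam is indexed from 1; the value lam 0 is irrelevant).\<close>

fun accA :: "(nat \<Rightarrow> real) \<Rightarrow> nat \<Rightarrow> real" where
  "accA lam 0 = 0"
| "accA lam (Suc k) = accA lam k +
     (lam (Suc k) + sqrt ((lam (Suc k))\<^sup>2 + 4 * lam (Suc k) * accA lam k)) / 2"

definition acca :: "(nat \<Rightarrow> real) \<Rightarrow> nat \<Rightarrow> real" where
  "acca lam k = accA lam k - accA lam (k - 1)"

definition xtil :: "(nat \<Rightarrow> real) \<Rightarrow> (nat \<Rightarrow> 'a::real_vector) \<Rightarrow> (nat \<Rightarrow> 'a) \<Rightarrow> nat \<Rightarrow> 'a" where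
  "xtil lam x y k = (accA lam k / accA lam (Suc k)) *\<^sub>R y k
                    + (acca lam (Suc k) / accA lam (Suc k)) *\<^sub>R x k"

text \<open>G is the gradient of g (passed explicitly).\<close>
definition accel_framework ::
  "('a::euclidean_space \<Rightarrow> 'a) \<Rightarrow> real \<Rightarrow> real \<Rightarrow> nat \<Rightarrow> (nat \<Rightarrow> real)
    \<Rightarrow> (nat \<Rightarrow> 'a) \<Rightarrow> (nat \<Rightarrow> 'a) \<Rightarrow> bool" where
  "accel_framework G \<sigma> \<delta> K lam x y \<longleftrightarrow>
     (\<forall>k\<in>{1..K}. lam k > 0) \<and> x 0 = 0 \<and> y 0 = 0 \<and>
     (\<forall>k<K.
        norm (lam (Suc k) *\<^sub>R G (y (Suc k)) + y (Suc k) - xtil lam x y k)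
          \<le> \<sigma> * norm (y (Suc k) - xtil lam x y k) + lam (Suc k) * \<delta>
      \<and> norm (x (Suc k) - (x k - acca lam (Suc k) *\<^sub>R G (y (Suc k))))
          \<le> acca lam (Suc k) * \<delta>)"

end

theory Submission
  imports Defs
begin

text \<open>
  For an arbitrary reference point \<open>u\<close>, the quantity
  \<open>\<Phi>\<^sub>k = A\<^sub>k (g y\<^sub>k - g u) + \<parallel>x\<^sub>k - u\<parallel>\<^sup>2/2\<close> is an approximate Lyapunov function: one step
  decreases it by at least \<open>(1-\<sigma>)A\<^sub>k\<^sub>+\<^sub>1/(2\<lambda>\<^sub>k\<^sub>+\<^sub>1) \<parallel>y\<^sub>k\<^sub>+\<^sub>1 - xtil\<^sub>k\<parallel>\<^sup>2\<close>, up to the error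
  \<open>\<delta> a\<^sub>k\<^sub>+\<^sub>1 \<parallel>x\<^sub>k\<^sub>+\<^sub>1 - u\<parallel> + \<delta>\<^sup>2 a\<^sub>k\<^sub>+\<^sub>1\<^sup>2/(2(1-\<sigma>))\<close>. The gradient inequality at \<open>y\<^sub>k\<^sub>+\<^sub>1\<close>,
  weighted by \<open>A\<^sub>k\<close> towards \<open>y\<^sub>k\<close> and by \<open>a\<^sub>k\<^sub>+\<^sub>1\<close> towards \<open>u\<close>, bounds the change of \<open>\<Phi>\<close>
  by inner products with \<open>\<nabla>g(y\<^sub>k\<^sub>+\<^sub>1)\<close>; expanding the gradient step for \<open>x\<^sub>k\<^sub>+\<^sub>1\<close> produces
  \<open>a\<^sub>k\<^sub>+\<^sub>1\<^sup>2 \<parallel>\<nabla>g(y\<^sub>k\<^sub>+\<^sub>1)\<parallel>\<^sup>2/2\<close>, and since \<open>a\<^sub>k\<^sub>+\<^sub>1\<^sup>2 = \<lambda>\<^sub>k\<^sub>+\<^sub>1 A\<^sub>k\<^sub>+\<^sub>1\<close> the remaining terms are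
  exactly \<open>A\<^sub>k\<^sub>+\<^sub>1/(2\<lambda>\<^sub>k\<^sub>+\<^sub>1)\<close> times the square of the proximal residual, which the relative
  error criterion controls. Telescoping from \<open>\<Phi>\<^sub>0 = \<parallel>u\<parallel>\<^sup>2/2\<close> gives the bound.
\<close>

lemma convex_on_restrict_line:
  assumes "convex_on UNIV g"
  shows "convex_on UNIV (\<lambda>t::real. g (z + t *\<^sub>R d))"
proof (rule convex_onI)
  fix t s s' :: real assume t: "0 < t" "t < 1"
  have "z + ((1 - t) * s + t * s') *\<^sub>R d = (1 - t) *\<^sub>R (z + s *\<^sub>R d) + t *\<^sub>R (z + s' *\<^sub>R d)"
    by (simp add: algebra_simps)
  then show "g (z + ((1 - t) *\<^sub>R s + t *\<^sub>R s') *\<^sub>R d) \<le> (1 - t) * g (z + s *\<^sub>R d) + t * g (z + s' *\<^sub>R d)"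
    using convex_onD[OF assms, of t "z + s *\<^sub>R d" "z + s' *\<^sub>R d"] t by simp
qed auto

lemma convex_on_gradient_inequality:
  fixes g :: "'a::real_inner \<Rightarrow> real"
  assumes conv: "convex_on UNIV g" and grad: "GDERIV g z :> D"
  shows "g z + inner D (w - z) \<le> g w"
proof -
  define d where "d = w - z"
  define h where "h t = g (z + t *\<^sub>R d)" for t :: real
  have "((\<lambda>t. z + t *\<^sub>R d) has_derivative (\<lambda>t. t *\<^sub>R d)) (at 0)"
    by (auto intro!: derivative_eq_intros)
  moreover have "(g has_derivative (\<lambda>v. inner v D)) (at (z + 0 *\<^sub>R d))"
    using grad by (simp add: gderiv_def)
  ultimately have "(h has_derivative (\<lambda>t. inner (t *\<^sub>R d) D)) (at 0)"
    unfolding h_def by (rule has_derivative_compose)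
  then have "(h has_field_derivative inner d D) (at 0)"
    by (simp add: has_field_derivative_def mult.commute[of _ "inner d D"])
  moreover have "convex_on UNIV h"
    unfolding h_def by (rule convex_on_restrict_line[OF conv])
  ultimately have "inner d D * (1 - 0) \<le> h 1 - h 0"
    by (intro convex_on_imp_above_tangent[where A = UNIV]) auto
  then show ?thesis by (simp add: h_def d_def inner_commute)
qed

lemma accA_nonneg:
  assumes "\<And>i. 1 \<le> i \<Longrightarrow> i \<le> k \<Longrightarrow> 0 < lam i"
  shows "0 \<le> accA lam k"
  using assms
proof (induction k)
  case (Suc k)
  then have "0 \<le> accA lam k" "0 < lam (Suc k)" by auto
  then show ?case by simp
qed simp

lemma accA_Suc_eq: "accA lam (Suc k) = accA lam k + acca lam (Suc k)"
  by (simp add: acca_def)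

lemma acca_Suc_pos:
  assumes "0 < lam (Suc k)" "0 \<le> accA lam k"
  shows "0 < acca lam (Suc k)"
  using assms by (simp add: acca_def add_pos_nonneg)

lemma acca_Suc_squared:
  assumes "0 < lam (Suc k)" "0 \<le> accA lam k"
  shows "(acca lam (Suc k))\<^sup>2 = lam (Suc k) * accA lam (Suc k)"
proof -
  define l A where "l = lam (Suc k)" and "A = accA lam k"
  have "0 \<le> l\<^sup>2 + 4 * l * A" using assms by (simp add: l_def A_def)
  then have "(sqrt (l\<^sup>2 + 4 * l * A))\<^sup>2 = l\<^sup>2 + 4 * l * A" by simp
  then show ?thesis
    by (simp add: acca_def l_def[symmetric] A_def[symmetric] power2_eq_square algebra_simps)
qed

lemma xtil_scaled:
  assumes "accA lam (Suc k) \<noteq> 0"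
  shows "accA lam (Suc k) *\<^sub>R xtil lam x y k = accA lam k *\<^sub>R y k + acca lam (Suc k) *\<^sub>R x k"
  using assms by (simp add: xtil_def scaleR_add_right)

lemma telescoping_estimate:
  fixes \<Phi> c e :: "nat \<Rightarrow> real"
  assumes "\<And>j. j < k \<Longrightarrow> \<Phi> (Suc j) + c (Suc j) \<le> \<Phi> j + e (Suc j)"
  shows "\<Phi> k + (\<Sum>i\<in>{1..k}. c i) \<le> \<Phi> 0 + (\<Sum>i\<in>{1..k}. e i)"
  using assms
proof (induction k)
  case (Suc k)
  then have "\<Phi> k + (\<Sum>i\<in>{1..k}. c i) \<le> \<Phi> 0 + (\<Sum>i\<in>{1..k}. e i)"
    and "\<Phi> (Suc k) + c (Suc k) \<le> \<Phi> k + e (Suc k)" by auto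
  then show ?case by simp
qed simp

lemma inexact_step_distance:
  fixes x x' u v :: "'a::real_inner"
  assumes "norm (x' - (x - a *\<^sub>R v)) \<le> a * \<delta>"
  shows "(1/2) * (norm (x' - u))\<^sup>2
    \<le> (1/2) * (norm (x - u))\<^sup>2 - a * inner v (x - u) + (1/2) * a\<^sup>2 * (norm v)\<^sup>2
       + \<delta> * (a * norm (x' - u))"
proof -
  define e where "e = x' - (x - a *\<^sub>R v)"
  have exact: "(norm (x - a *\<^sub>R v - u))\<^sup>2 = (norm (x - u))\<^sup>2 - 2 * (a * inner v (x - u)) + a\<^sup>2 * (norm v)\<^sup>2"
    unfolding power2_norm_eq_inner
    by (simp add: inner_diff_left inner_diff_right inner_commute algebra_simps power2_eq_square)
  have "x - a *\<^sub>R v - u = (x' - u) - e" by (simp add: e_def)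
  then have perturbed: "(norm (x - a *\<^sub>R v - u))\<^sup>2 = (norm (x' - u))\<^sup>2 - 2 * inner (x' - u) e + (norm e)\<^sup>2"
    by (simp add: power2_norm_eq_inner inner_diff_left inner_diff_right inner_commute)
  have "inner (x' - u) e \<le> \<delta> * (a * norm (x' - u))"
    using Cauchy_Schwarz_ineq2[of "x' - u" e] mult_left_mono[OF assms norm_ge_zero[of "x' - u"]]
    by (simp add: e_def ac_simps)
  moreover have "0 \<le> (norm e)\<^sup>2" by simp
  ultimately show ?thesis using exact perturbed by linarith
qed

lemma relative_error_bound:
  fixes v r :: "'a::real_inner"
  assumes l: "0 < l" and \<sigma>: "0 \<le> \<sigma>" "\<sigma> < 1"
    and err: "norm (l *\<^sub>R v + r) \<le> \<sigma> * norm r + l * \<delta>"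
  shows "2 * l * inner v r + l\<^sup>2 * (norm v)\<^sup>2 + (1 - \<sigma>) * (norm r)\<^sup>2 \<le> (l * \<delta>)\<^sup>2 / (1 - \<sigma>)"
proof -
  have expand: "(norm (l *\<^sub>R v + r))\<^sup>2 = l\<^sup>2 * (norm v)\<^sup>2 + 2 * l * inner v r + (norm r)\<^sup>2"
    unfolding power2_norm_eq_inner
    by (simp add: inner_add_left inner_add_right inner_commute power2_eq_square algebra_simps)
  have "(norm (l *\<^sub>R v + r))\<^sup>2 \<le> (\<sigma> * norm r + l * \<delta>)\<^sup>2"
    using err by (intro power_mono) auto
  also have "\<dots> \<le> \<sigma> * (norm r)\<^sup>2 + (l * \<delta>)\<^sup>2 / (1 - \<sigma>)"
  proof -
    \<comment> \<open>Young's inequality \<open>2 \<sigma> s t \<le> \<sigma>(1-\<sigma>) s\<^sup>2 + \<sigma> t\<^sup>2/(1-\<sigma>)\<close>\<close>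
    have "0 \<le> \<sigma> * ((1 - \<sigma>) * norm r - l * \<delta>)\<^sup>2" using \<sigma> by simp
    then have "(1 - \<sigma>) * (\<sigma> * norm r + l * \<delta>)\<^sup>2 \<le> (1 - \<sigma>) * (\<sigma> * (norm r)\<^sup>2) + (l * \<delta>)\<^sup>2"
      by (simp add: power2_eq_square algebra_simps)
    then show ?thesis using \<sigma> by (simp add: field_simps)
  qed
  finally show ?thesis unfolding expand by (simp add: algebra_simps)
qed

lemma weighted_gradient_inequality:
  fixes g :: "'a::real_inner \<Rightarrow> real"
  assumes conv: "convex_on UNIV g" and grad: "GDERIV g y' :> v"
    and A: "0 \<le> A" and a: "0 \<le> a" and A': "A' = A + a"
    and xt: "A' *\<^sub>R xt = A *\<^sub>R y + a *\<^sub>R x"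
  shows "A' * (g y' - g u) \<le> A * (g y - g u) + A' * inner v (y' - xt) + a * inner v (x - u)"
proof -
  have "A * (g y' - g y) \<le> A * inner v (y' - y)"
    using convex_on_gradient_inequality[OF conv grad, of y] A
    by (intro mult_left_mono) (auto simp: inner_diff_right)
  moreover have "a * (g y' - g u) \<le> a * inner v (y' - u)"
    using convex_on_gradient_inequality[OF conv grad, of u] a
    by (intro mult_left_mono) (auto simp: inner_diff_right)
  moreover have "A' * inner v xt = A * inner v y + a * inner v x"
    using arg_cong[OF xt, of "inner v"] by (simp add: inner_add_right)
  ultimately show ?thesis
    by (simp add: A' inner_diff_right algebra_simps)
qed

lemma accelerated_step_decrease:
  fixes g :: "'a::real_inner \<Rightarrow> real"
  assumes conv: "convex_on UNIV g" and grad: "GDERIV g y' :> v"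
    and \<sigma>: "0 \<le> \<sigma>" "\<sigma> < 1"
    and l: "0 < l" and A: "0 \<le> A" and a: "0 < a" and A': "A' = A + a" and a_sq: "a\<^sup>2 = l * A'"
    and xt: "A' *\<^sub>R xt = A *\<^sub>R y + a *\<^sub>R x"
    and prox: "norm (l *\<^sub>R v + y' - xt) \<le> \<sigma> * norm (y' - xt) + l * \<delta>"
    and step: "norm (x' - (x - a *\<^sub>R v)) \<le> a * \<delta>"
  shows "A' * (g y' - g u) + (1/2) * (norm (x' - u))\<^sup>2 + (1 - \<sigma>) * A' / (2 * l) * (norm (y' - xt))\<^sup>2
     \<le> A * (g y - g u) + (1/2) * (norm (x - u))\<^sup>2 + \<delta> * (a * norm (x' - u)) + \<delta>\<^sup>2 / (2 * (1 - \<sigma>)) * a\<^sup>2"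
proof -
  define r where "r = y' - xt"
  have gap: "A' * (g y' - g u) \<le> A * (g y - g u) + A' * inner v r + a * inner v (x - u)"
    unfolding r_def using weighted_gradient_inequality[OF conv grad A _ A' xt] a by simp
  define c where "c = A' / (2 * l)"
  have "c * (2 * l * inner v r + l\<^sup>2 * (norm v)\<^sup>2 + (1 - \<sigma>) * (norm r)\<^sup>2)
      \<le> c * ((l * \<delta>)\<^sup>2 / (1 - \<sigma>))"
    using relative_error_bound[OF l \<sigma>, of v r \<delta>] prox A' A a l
    by (intro mult_left_mono) (auto simp: r_def c_def algebra_simps)
  \<comment> \<open>\<open>a\<^sup>2 = l A'\<close> is exactly what makes the weight \<open>A'/(2l)\<close> produce \<open>a\<^sup>2/2\<close> in front of \<open>\<parallel>v\<parallel>\<^sup>2\<close>\<close>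
  moreover have "c * (2 * l) = A'" "c * l\<^sup>2 = (1/2) * a\<^sup>2"
    "c * ((l * \<delta>)\<^sup>2 / (1 - \<sigma>)) = \<delta>\<^sup>2 / (2 * (1 - \<sigma>)) * a\<^sup>2"
    using l a_sq by (auto simp: c_def power2_eq_square field_simps mult.commute)
  moreover have "c * (2 * l * inner v r + l\<^sup>2 * (norm v)\<^sup>2 + (1 - \<sigma>) * (norm r)\<^sup>2)
      = c * (2 * l) * inner v r + c * l\<^sup>2 * (norm v)\<^sup>2 + (1 - \<sigma>) * c * (norm r)\<^sup>2"
    by (simp add: algebra_simps)
  ultimately have "A' * inner v r + (1/2) * a\<^sup>2 * (norm v)\<^sup>2 + (1 - \<sigma>) * c * (norm r)\<^sup>2
      \<le> \<delta>\<^sup>2 / (2 * (1 - \<sigma>)) * a\<^sup>2"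
    by simp
  moreover have "(1 - \<sigma>) * A' / (2 * l) = (1 - \<sigma>) * c" by (simp add: c_def)
  ultimately show ?thesis using gap inexact_step_distance[OF step, of u]
    by (simp add: r_def)
qed

text \<open>The estimate holds for every reference point \<open>u\<close>.\<close>
lemma accel_framework_estimate:
  fixes g :: "'a::euclidean_space \<Rightarrow> real"
  assumes conv: "convex_on UNIV g" and grad: "\<And>z. GDERIV g z :> G z"
    and \<sigma>: "0 \<le> \<sigma>" "\<sigma> < 1"
    and framework: "accel_framework G \<sigma> \<delta> K lam x y" and k: "k \<le> K"
  shows "accA lam k * (g (y k) - g u) + (1/2) * (norm (x k - u))\<^sup>2
         + (\<Sum>i\<in>{1..k}. (1 - \<sigma>) * accA lam i / (2 * lam i) * (norm (y i - xtil lam x y (i - 1)))\<^sup>2)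
       \<le> (1/2) * (norm u)\<^sup>2
         + (\<Sum>i\<in>{1..k}. \<delta> * (acca lam i * norm (x i - u)) + \<delta>\<^sup>2 / (2 * (1 - \<sigma>)) * (acca lam i)\<^sup>2)"
proof -
  have lam_pos: "\<And>i. 1 \<le> i \<Longrightarrow> i \<le> K \<Longrightarrow> 0 < lam i"
    using framework by (auto simp: accel_framework_def)
  have "accA lam (Suc j) * (g (y (Suc j)) - g u) + (1/2) * (norm (x (Suc j) - u))\<^sup>2
        + (1 - \<sigma>) * accA lam (Suc j) / (2 * lam (Suc j)) * (norm (y (Suc j) - xtil lam x y j))\<^sup>2
      \<le> accA lam j * (g (y j) - g u) + (1/2) * (norm (x j - u))\<^sup>2
        + (\<delta> * (acca lam (Suc j) * norm (x (Suc j) - u)) + \<delta>\<^sup>2 / (2 * (1 - \<sigma>)) * (acca lam (Suc j))\<^sup>2)"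
    if j: "j < K" for j
  proof -
    have l: "0 < lam (Suc j)" using lam_pos j by simp
    have A: "0 \<le> accA lam j" using lam_pos j by (intro accA_nonneg) auto
    have a: "0 < acca lam (Suc j)" using acca_Suc_pos[OF l A] .
    have "accA lam (Suc j) \<noteq> 0" using A a accA_Suc_eq[of lam j] by linarith
    note xt = xtil_scaled[OF this, of x y]
    have prox: "norm (lam (Suc j) *\<^sub>R G (y (Suc j)) + y (Suc j) - xtil lam x y j)
          \<le> \<sigma> * norm (y (Suc j) - xtil lam x y j) + lam (Suc j) * \<delta>"
      and step: "norm (x (Suc j) - (x j - acca lam (Suc j) *\<^sub>R G (y (Suc j)))) \<le> acca lam (Suc j) * \<delta>"
      using framework j by (auto simp: accel_framework_def)
    show ?thesis
      using accelerated_step_decrease[OF conv grad \<sigma> l A a accA_Suc_eq acca_Suc_squared[OF l A]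
          xt prox step, of u]
      by simp
  qed
  moreover have "x 0 = 0" using framework by (simp add: accel_framework_def)
  ultimately show ?thesis
    using telescoping_estimate[of k "\<lambda>k. accA lam k * (g (y k) - g u) + (1/2) * (norm (x k - u))\<^sup>2"] k
    by simp
qed

theorem mainTheorem11:
  fixes g :: "'a::euclidean_space \<Rightarrow> real" and G :: "'a \<Rightarrow> 'a"
    and \<sigma> \<delta> :: real and K :: nat and lam :: "nat \<Rightarrow> real"
    and x y :: "nat \<Rightarrow> 'a" and xs :: 'a
  assumes conv: "convex_on UNIV g"
    and grad: "\<And>z. GDERIV g z :> G z"
    and sigma: "0 < \<sigma>" "\<sigma> < 1"
    and delta: "0 \<le> \<delta>"
    and K: "1 \<le> K"
    and framework: "accel_framework G \<sigma> \<delta> K lam x y"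
    and minimizer: "\<And>z. g xs \<le> g z"
    and k: "1 \<le> k" "k \<le> K"
  shows "accA lam k * (g (y k) - g xs) + (1/2) * (norm (x k - xs))\<^sup>2
         + (\<Sum>i\<in>{1..k}. (1 - \<sigma>) * accA lam i / (2 * lam i)
                           * (norm (y i - xtil lam x y (i - 1)))\<^sup>2)
       \<le> (1/2) * (norm xs)\<^sup>2
         + (\<delta> * (\<Sum>i\<in>{1..k}. acca lam i * norm (x i - xs))
            + \<delta>\<^sup>2 / (2 * (1 - \<sigma>)) * (\<Sum>i\<in>{1..k}. (acca lam i)\<^sup>2))"
  using accel_framework_estimate[OF conv grad _ sigma(2) framework k(2), of xs] sigma(1)
  by (simp add: sum.distrib sum_distrib_left)

end
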